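(* Fix $n\ge0$. For every formula $\phi\in\mathcal{L}^1$ and label $w$, every labelled sequent generated during the computation of $\mathtt{Prove_n}(w:\phi)$ is forestlike.
   Context: Single-agent setting: $Ag=\{1\}$. Formulas $\phi ::= p \mid \overline{p} \mid (\phi\wedge\phi) \mid (\phi\vee\phi) \mid \Box\phi \mid \Diamond\phi \mid [1]\phi \mid \langle 1\rangle\phi$; $\overline{\phi}$ swaps $p/\overline{p}$, $\wedge/\vee$, $\Box/\Diamond$, $[1]/\langle 1\rangle$. A labelled sequent $\mathcal{R},\Gamma$ consists of relational atoms $\mathcal{R}_1xy$ and labelled formulas $x:\phi$. Graphs. The graph $G(\Lambda)$ of a sequent $\Lambda$ has the labels of $\Lambda$ as vertices and a directed edge $(x,y)$ for each $\mathcal{R}_1xy\in\Lambda$; each vertex $x$ is labelled by the formulas $\phi$ with $x:\phi\in\Lambda$. A graph is a tree iff there is a node (root) with exactly one directed path to every other node; a forest is a disjoint union of trees. $\Lambda$ is forestlike iff $G(\Lambda)$ is a forest; each tree of it is a choice-tree, and $CT(w)$ denotes the choice-tree containing label $w$. For a forestlike $\Lambda$ and label $w$: $w$ is saturated iff (i) $w:\phi\in\Lambda$ implies $w:\overline{\phi}\notin\Lambda$, (ii) $w:\phi\vee\psi\in\Lambda$ implies $w:\phi\in\Lambda$ and $w:\psi\in\Lambda$, (iii) $w:\phi\wedge\psi\in\Lambda$ implies $w:\phi\in\Lambda$ or $w:\psi\in\Lambda$. $w$ is $\Box$-realized iff for each $w:\Box\phi\in\Lambda$ some label $u$ has $u:\phi\in\Lambda$;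 $[1]$-realized iff for each $w:[1]\phi\in\Lambda$ some $u$ in $CT(w)$ has $u:\phi\in\Lambda$; $\Diamond$-propagated iff for each $w:\Diamond\phi\in\Lambda$, $u:\phi\in\Lambda$ for all labels $u$ of $\Lambda$; $\langle1\rangle$-propagated iff for each $w:\langle1\rangle\phi\in\Lambda$, $u:\phi\in\Lambda$ for all $u$ in $CT(w)$. $\Lambda$ is $n$-choice consistent (for $n>0$) iff $G(\Lambda)$ has at most $n$ choice-trees. $\Lambda$ is stable iff all labels are saturated, $\Box$- and $[1]$-realized, $\Diamond$- and $\langle1\rangle$-propagated, and (when $n>0$) $\Lambda$ is $n$-choice consistent. Algorithm $\mathtt{Prove_n}(\mathcal{R},\Gamma)$ (returns true/false), steps tried in order: 1. If $\mathcal{R},\Gamma$ contains $w:p$ and $w:\overline{p}$ for some $w,p$, return true. 2. If $\mathcal{R},\Gamma$ is stable, return false. 3. If some label $w$ is not saturated: (i) if $w:\phi\vee\psi$ is present but $w:\phi$ or $w:\psi$ is absent, return $\mathtt{Prove_n}(\mathcal{R},w:\phi,w:\psi,\Gamma)$; (ii) if $w:\phi\wedge\psi$ is present but neither $w:\phi$ nor $w:\psi$ is, return false if $\mathtt{Prove_n}(\mathcal{R},w:\phi,\Gamma)$ or $\mathtt{Prove_n}(\mathcal{R},w:\psi,\Gamma)$ returns false, and true otherwise. 4. If some label $w$ is not $\langle1\rangle$-propagated, i.e. some $w:\langle1\rangle\phi$ is present and some $u$ in $CT(w)$ has $u:\phi$ absent, return $\mathtt{Prove_n}(\mathcal{R},u:\phi,\Gamma)$.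 5. If some $w$ is not $\Diamond$-propagated, i.e. some $w:\Diamond\phi$ is present and some label $u$ has $u:\phi$ absent, return $\mathtt{Prove_n}(\mathcal{R},u:\phi,\Gamma)$. 6. If some $w$ is not $[1]$-realized, i.e. some $w:[1]\phi$ is present with $u:\phi$ absent for every $u$ in $CT(w)$, return $\mathtt{Prove_n}(\mathcal{R},\mathcal{R}_1wv,v:\phi,\Gamma)$ with $v$ a fresh label. 7. If some $w$ is not $\Box$-realized, i.e. some $w:\Box\phi$ is present with $u:\phi$ absent for every label $u$, return $\mathtt{Prove_n}(\mathcal{R},v:\phi,\Gamma)$ with $v$ fresh. 8. (Only when $n>0$.) If $\mathcal{R},\Gamma$ is not $n$-choice consistent, pick distinct roots $w_0,\dots,w_n$ of choice-trees and, for each $0\le k\le n-1$, $k+1\le j\le n$, compute $\mathtt{Prove_n}(\mathcal{R},\mathcal{R}_1w_kw_j,\Gamma)$; return false if some call returns false, and true otherwise. For $n=0$ step 8 is absent and stability does not include $n$-choice consistency. *)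

theory Defs
  imports Main "HOL-Library.Disjoint_Sets"
begin

(* Formulas of L^1 (single agent) in negation normal form.
   Stit = [1], CStit = <1>. *)
datatype fml =
    Atom nat | NAtom nat
  | Conj fml fml | Disj fml fml
  | Box fml | Dia fml
  | Stit fml | CStit fml

fun neg :: "fml \<Rightarrow> fml" where
  "neg (Atom p) = NAtom p"
| "neg (NAtom p) = Atom p"
| "neg (Conj a b) = Disj (neg a) (neg b)"
| "neg (Disj a b) = Conj (neg a) (neg b)"
| "neg (Box a) = Dia (neg a)"
| "neg (Dia a) = Box (neg a)"
| "neg (Stit a) = CStit (neg a)"
| "neg (CStit a) = Stit (neg a)"

(* labels are natural numbers; a labelled sequent is a pair (R, Gamma):
   R = set of relational atoms R_1 x y (as pairs (x,y)),
   Gamma = set of labelled formulas x:phi (as pairs (x,phi)) *)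
type_synonym seq = "(nat \<times> nat) set \<times> (nat \<times> fml) set"

definition labels :: "seq \<Rightarrow> nat set" where
  "labels S = fst ` fst S \<union> snd ` fst S \<union> fst ` snd S"

definition is_dpath :: "(nat \<times> nat) set \<Rightarrow> nat list \<Rightarrow> bool" where
  "is_dpath E xs \<longleftrightarrow> xs \<noteq> [] \<and> distinct xs \<and>
     (\<forall>i. Suc i < length xs \<longrightarrow> (xs ! i, xs ! Suc i) \<in> E)"

definition is_tree :: "nat set \<Rightarrow> (nat \<times> nat) set \<Rightarrow> bool" where
  "is_tree V E \<longleftrightarrow> E \<subseteq> V \<times> V \<and>
     (\<exists>r\<in>V. \<forall>v\<in>V. v \<noteq> r \<longrightarrow> (\<exists>!xs. is_dpath E xs \<and> hd xs = r \<and> last xs = v))"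

definition is_forest :: "nat set \<Rightarrow> (nat \<times> nat) set \<Rightarrow> bool" where
  "is_forest V E \<longleftrightarrow> (\<exists>P. partition_on V P \<and>
     (\<forall>(x,y)\<in>E. \<exists>C\<in>P. x \<in> C \<and> y \<in> C) \<and>
     (\<forall>C\<in>P. is_tree C (E \<inter> (C \<times> C))))"

definition forestlike :: "seq \<Rightarrow> bool" where
  "forestlike S \<longleftrightarrow> is_forest (labels S) (fst S)"

(* the choice-tree containing w (= its weakly connected component) *)
definition CT :: "seq \<Rightarrow> nat \<Rightarrow> nat set" where
  "CT S w = {u. (w, u) \<in> (fst S \<union> (fst S)\<inverse>)\<^sup>*}"

definition is_root :: "seq \<Rightarrow> nat \<Rightarrow> bool" where
  "is_root S r \<longleftrightarrow> r \<in> labels S \<and>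
     (\<forall>u\<in>CT S r. u \<noteq> r \<longrightarrow> (\<exists>!xs. is_dpath (fst S) xs \<and> hd xs = r \<and> last xs = u))"

definition saturated :: "seq \<Rightarrow> nat \<Rightarrow> bool" where
  "saturated S w \<longleftrightarrow>
     (\<forall>\<phi>. (w,\<phi>) \<in> snd S \<longrightarrow> (w, neg \<phi>) \<notin> snd S) \<and>
     (\<forall>\<phi> \<psi>. (w, Disj \<phi> \<psi>) \<in> snd S \<longrightarrow> (w,\<phi>) \<in> snd S \<and> (w,\<psi>) \<in> snd S) \<and>
     (\<forall>\<phi> \<psi>. (w, Conj \<phi> \<psi>) \<in> snd S \<longrightarrow> (w,\<phi>) \<in> snd S \<or> (w,\<psi>) \<in> snd S)"

definition box_realized :: "seq \<Rightarrow> nat \<Rightarrow> bool" where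
  "box_realized S w \<longleftrightarrow> (\<forall>\<phi>. (w, Box \<phi>) \<in> snd S \<longrightarrow> (\<exists>u. (u,\<phi>) \<in> snd S))"

definition stit_realized :: "seq \<Rightarrow> nat \<Rightarrow> bool" where
  "stit_realized S w \<longleftrightarrow> (\<forall>\<phi>. (w, Stit \<phi>) \<in> snd S \<longrightarrow> (\<exists>u\<in>CT S w. (u,\<phi>) \<in> snd S))"

definition dia_propagated :: "seq \<Rightarrow> nat \<Rightarrow> bool" where
  "dia_propagated S w \<longleftrightarrow> (\<forall>\<phi>. (w, Dia \<phi>) \<in> snd S \<longrightarrow> (\<forall>u\<in>labels S. (u,\<phi>) \<in> snd S))"

definition cstit_propagated :: "seq \<Rightarrow> nat \<Rightarrow> bool" where
  "cstit_propagated S w \<longleftrightarrow> (\<forall>\<phi>. (w, CStit \<phi>) \<in> snd S \<longrightarrow> (\<forall>u\<in>CT S w. (u,\<phi>) \<in> snd S))"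

definition choice_consistent :: "nat \<Rightarrow> seq \<Rightarrow> bool" where
  "choice_consistent n S \<longleftrightarrow> card (CT S ` labels S) \<le> n"

definition stable :: "nat \<Rightarrow> seq \<Rightarrow> bool" where
  "stable n S \<longleftrightarrow>
     (\<forall>w\<in>labels S. saturated S w \<and> box_realized S w \<and> stit_realized S w \<and>
                    dia_propagated S w \<and> cstit_propagated S w) \<and>
     (0 < n \<longrightarrow> choice_consistent n S)"

definition closed :: "seq \<Rightarrow> bool" where
  "closed S \<longleftrightarrow> (\<exists>w p. (w, Atom p) \<in> snd S \<and> (w, NAtom p) \<in> snd S)"

(* applicability of the actions of steps 3--7 *)
definition app3 :: "seq \<Rightarrow> bool" where
  "app3 S \<longleftrightarrow>
     (\<exists>w \<phi> \<psi>. (w, Disj \<phi> \<psi>) \<in> snd S \<and> ((w,\<phi>) \<notin> snd S \<or> (w,\<psi>) \<notin> snd S)) \<or>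
     (\<exists>w \<phi> \<psi>. (w, Conj \<phi> \<psi>) \<in> snd S \<and> (w,\<phi>) \<notin> snd S \<and> (w,\<psi>) \<notin> snd S)"

definition app4 :: "seq \<Rightarrow> bool" where
  "app4 S \<longleftrightarrow> (\<exists>w \<phi> u. (w, CStit \<phi>) \<in> snd S \<and> u \<in> CT S w \<and> (u,\<phi>) \<notin> snd S)"

definition app5 :: "seq \<Rightarrow> bool" where
  "app5 S \<longleftrightarrow> (\<exists>w \<phi> u. (w, Dia \<phi>) \<in> snd S \<and> u \<in> labels S \<and> (u,\<phi>) \<notin> snd S)"

definition app6 :: "seq \<Rightarrow> bool" where
  "app6 S \<longleftrightarrow> (\<exists>w \<phi>. (w, Stit \<phi>) \<in> snd S \<and> (\<forall>u\<in>CT S w. (u,\<phi>) \<notin> snd S))"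

definition app7 :: "seq \<Rightarrow> bool" where
  "app7 S \<longleftrightarrow> (\<exists>w \<phi>. (w, Box \<phi>) \<in> snd S \<and> (\<forall>u. (u,\<phi>) \<notin> snd S))"

(* child n S S': Prove_n(S) makes a recursive call Prove_n(S') *)
inductive child :: "nat \<Rightarrow> seq \<Rightarrow> seq \<Rightarrow> bool" for n :: nat where
  step3i: "\<lbrakk>\<not> closed S; \<not> stable n S; (w, Disj \<phi> \<psi>) \<in> snd S;
            (w,\<phi>) \<notin> snd S \<or> (w,\<psi>) \<notin> snd S\<rbrakk>
           \<Longrightarrow> child n S (fst S, insert (w,\<phi>) (insert (w,\<psi>) (snd S)))"
| step3ii_l: "\<lbrakk>\<not> closed S; \<not> stable n S; (w, Conj \<phi> \<psi>) \<in> snd S;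
            (w,\<phi>) \<notin> snd S; (w,\<psi>) \<notin> snd S\<rbrakk>
           \<Longrightarrow> child n S (fst S, insert (w,\<phi>) (snd S))"
| step3ii_r: "\<lbrakk>\<not> closed S; \<not> stable n S; (w, Conj \<phi> \<psi>) \<in> snd S;
            (w,\<phi>) \<notin> snd S; (w,\<psi>) \<notin> snd S\<rbrakk>
           \<Longrightarrow> child n S (fst S, insert (w,\<psi>) (snd S))"
| step4: "\<lbrakk>\<not> closed S; \<not> stable n S; \<not> app3 S;
           (w, CStit \<phi>) \<in> snd S; u \<in> CT S w; (u,\<phi>) \<notin> snd S\<rbrakk>
           \<Longrightarrow> child n S (fst S, insert (u,\<phi>) (snd S))"
| step5: "\<lbrakk>\<not> closed S; \<not> stable n S; \<not> app3 S; \<not> app4 S;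
           (w, Dia \<phi>) \<in> snd S; u \<in> labels S; (u,\<phi>) \<notin> snd S\<rbrakk>
           \<Longrightarrow> child n S (fst S, insert (u,\<phi>) (snd S))"
| step6: "\<lbrakk>\<not> closed S; \<not> stable n S; \<not> app3 S; \<not> app4 S; \<not> app5 S;
           (w, Stit \<phi>) \<in> snd S; \<forall>u\<in>CT S w. (u,\<phi>) \<notin> snd S; v \<notin> labels S\<rbrakk>
           \<Longrightarrow> child n S (insert (w,v) (fst S), insert (v,\<phi>) (snd S))"
| step7: "\<lbrakk>\<not> closed S; \<not> stable n S; \<not> app3 S; \<not> app4 S; \<not> app5 S; \<not> app6 S;
           (w, Box \<phi>) \<in> snd S; \<forall>u. (u,\<phi>) \<notin> snd S; v \<notin> labels S\<rbrakk>
           \<Longrightarrow> child n S (fst S, insert (v,\<phi>) (snd S))"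
| step8: "\<lbrakk>\<not> closed S; \<not> stable n S; \<not> app3 S; \<not> app4 S; \<not> app5 S; \<not> app6 S; \<not> app7 S;
           0 < n; \<not> choice_consistent n S;
           inj_on r {0..n}; \<forall>i\<le>n. is_root S (r i); k < j; j \<le> n\<rbrakk>
           \<Longrightarrow> child n S (insert (r k, r j) (fst S), snd S)"

(* generated n S0 S: S is a sequent generated during the computation of Prove_n(S0) *)
inductive generated :: "nat \<Rightarrow> seq \<Rightarrow> seq \<Rightarrow> bool" for n :: nat and S0 :: seq where
  init: "generated n S0 S0"
| call: "\<lbrakk>generated n S0 S; child n S S'\<rbrakk> \<Longrightarrow> generated n S0 S'"

end

theory Submission
  imports Defs
begin

(* Every sequent generated from a single labelled formula carries a relation in which
   each label has at most one parent, together with a map \<rho> sending each label to a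
   parentless label from which it is reachable and which is constant along edges.
   Only steps 6 and 8 add relational atoms: step 6 hangs a fresh label below an existing
   one, step 8 hangs one root below another root, and both hang a root b below a label a
   with \<rho> a \<noteq> b, which preserves the invariant. In such a graph the fibres of \<rho> are
   trees rooted at their \<rho>-value: paths from the root exist by reachability and are
   unique because they can be traced back uniquely from their endpoint. *)

lemma is_dpath_singleton [simp]: "is_dpath E [x]"
  by (simp add: is_dpath_def)

lemma is_dpath_mono: "E \<subseteq> E' \<Longrightarrow> is_dpath E xs \<Longrightarrow> is_dpath E' xs"
  by (auto simp: is_dpath_def)

lemma is_dpath_restrict: "is_dpath E xs \<Longrightarrow> set xs \<subseteq> C \<Longrightarrow> is_dpath (E \<inter> C \<times> C) xs"
  unfolding is_dpath_def by (auto simp: nth_mem)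

lemma is_dpath_prefix:
  assumes "is_dpath E (xs @ ys)" and "xs \<noteq> []"
  shows "is_dpath E xs"
  unfolding is_dpath_def
proof (intro conjI allI impI)
  fix i assume "Suc i < length xs"
  with assms(1) show "(xs ! i, xs ! Suc i) \<in> E"
    unfolding is_dpath_def by (metis Suc_lessD length_append nth_append_left trans_less_add1)
qed (use assms in \<open>auto simp: is_dpath_def\<close>)

lemma is_dpath_hd_eq_last: "is_dpath E xs \<Longrightarrow> hd xs = last xs \<Longrightarrow> xs = [hd xs]"
  unfolding is_dpath_def by (cases xs) (auto split: if_splits)

lemma is_dpath_snoc:
  assumes "xs \<noteq> []"
  shows "is_dpath E (xs @ [z]) \<longleftrightarrow> is_dpath E xs \<and> z \<notin> set xs \<and> (last xs, z) \<in> E"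
proof -
  have "(xs @ [z]) ! i = xs ! i" "(xs @ [z]) ! Suc i = z" if "Suc i = length xs" for i
    using that by (auto simp: nth_append)
  moreover have "last xs = xs ! (length xs - 1)"
    using assms by (simp add: last_conv_nth)
  ultimately show ?thesis
    using assms unfolding is_dpath_def
    by (auto simp: nth_append less_Suc_eq) (metis One_nat_def diff_Suc_1)
qed

lemma is_dpath_last_edge:
  assumes "is_dpath E xs" and "hd xs \<noteq> last xs"
  obtains ys where "xs = ys @ [last xs]" "is_dpath E ys" "hd ys = hd xs" "(last ys, last xs) \<in> E"
proof -
  obtain ys z where xs: "xs = ys @ [z]"
    using assms(1) unfolding is_dpath_def by (metis rev_exhaust)
  with assms(2) have "ys \<noteq> []" by auto
  with that assms(1) xs show thesis by (simp add: is_dpath_snoc)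
qed

lemma is_dpath_unique:
  assumes single_parent: "\<And>x x' y. (x, y) \<in> E \<Longrightarrow> (x', y) \<in> E \<Longrightarrow> x = x'"
    and "is_dpath E xs" "is_dpath E ys" "hd xs = hd ys" "last xs = last ys"
    and "\<And>x. (x, hd xs) \<notin> E"
  shows "xs = ys"
  using assms(2-)
proof (induction "length xs" arbitrary: xs ys rule: less_induct)
  case less
  show ?case
  proof (cases "hd xs = last xs")
    case True
    with less.prems show ?thesis by (metis is_dpath_hd_eq_last)
  next
    case False
    obtain xs' where xs: "xs = xs' @ [last xs]" "is_dpath E xs'" "hd xs' = hd xs"
      and edge_xs: "(last xs', last xs) \<in> E"
      using less.prems(1) False by (rule is_dpath_last_edge)
    obtain ys' where ys: "ys = ys' @ [last ys]" "is_dpath E ys'" "hd ys' = hd ys"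
      and edge_ys: "(last ys', last ys) \<in> E"
      using less.prems(2) False less.prems(3,4) by (metis is_dpath_last_edge)
    have "last xs' = last ys'"
      using single_parent edge_xs edge_ys less.prems(4) by metis
    moreover have "length xs' < length xs"
      using xs(1) by (metis length_append_singleton lessI)
    ultimately have "xs' = ys'"
      using less xs ys by metis
    with xs(1) ys(1) less.prems(4) show ?thesis by metis
  qed
qed

lemma rtrancl_imp_dpath:
  assumes "(r, v) \<in> E\<^sup>*"
  shows "\<exists>xs. is_dpath E xs \<and> hd xs = r \<and> last xs = v \<and> (\<forall>x \<in> set xs. (r, x) \<in> E\<^sup>*)"
  using assms
proof (induction rule: rtrancl_induct)
  case base
  show ?case by (intro exI[of _ "[r]"]) simp
next
  case (step y z)
  then obtain xs where xs: "is_dpath E xs" "hd xs = r" "last xs = y" "\<forall>x \<in> set xs. (r, x) \<in> E\<^sup>*"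
    by blast
  have "xs \<noteq> []"
    using xs(1) by (simp add: is_dpath_def)
  show ?case
  proof (cases "z \<in> set xs")
    case True
    then obtain as bs where "xs = (as @ [z]) @ bs"
      by (metis append_Cons append_Nil append_assoc split_list)
    with xs show ?thesis
      by (intro exI[of _ "as @ [z]"]) (auto intro: is_dpath_prefix simp: hd_append)
  next
    case False
    with xs \<open>xs \<noteq> []\<close> step show ?thesis
      by (intro exI[of _ "xs @ [z]"]) (auto simp: is_dpath_snoc)
  qed
qed

definition rooted_forest :: "('a \<times> 'a) set \<Rightarrow> ('a \<Rightarrow> 'a) \<Rightarrow> bool" where
  "rooted_forest E \<rho> \<longleftrightarrow>
     (\<forall>x x' y. (x, y) \<in> E \<longrightarrow> (x', y) \<in> E \<longrightarrow> x = x') \<and>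
     (\<forall>x y. (x, y) \<in> E \<longrightarrow> \<rho> y = \<rho> x) \<and>
     (\<forall>v. (\<rho> v, v) \<in> E\<^sup>* \<and> (\<forall>x. (x, \<rho> v) \<notin> E))"

lemma rooted_forest_empty: "rooted_forest {} id"
  by (simp add: rooted_forest_def)

lemma rooted_forest_parentless_fixed:
  assumes "rooted_forest E \<rho>" and "\<And>x. (x, v) \<notin> E"
  shows "\<rho> v = v"
proof -
  have "(\<rho> v, v) \<in> E\<^sup>*"
    using assms(1) by (simp add: rooted_forest_def)
  then show ?thesis
    by (cases rule: rtranclE) (use assms(2) in auto)
qed

lemma rooted_forest_root_idem: "rooted_forest E \<rho> \<Longrightarrow> \<rho> (\<rho> v) = \<rho> v"
  by (rule rooted_forest_parentless_fixed) (auto simp: rooted_forest_def)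

lemma rooted_forest_rtrancl:
  assumes "rooted_forest E \<rho>" and "(x, y) \<in> E\<^sup>*"
  shows "\<rho> y = \<rho> x"
  using assms(2) by induction (use assms(1) in \<open>auto simp: rooted_forest_def\<close>)

lemma rooted_forest_insert:
  assumes forest: "rooted_forest E \<rho>" and b_root: "\<And>x. (x, b) \<notin> E" and "\<rho> a \<noteq> b"
  shows "rooted_forest (insert (a, b) E) (\<lambda>u. if \<rho> u = b then \<rho> a else \<rho> u)"
proof -
  let ?E = "insert (a, b) E"
  have \<rho>b: "\<rho> b = b"
    using forest b_root by (rule rooted_forest_parentless_fixed)
  have reach: "(\<rho> u, u) \<in> ?E\<^sup>*" for u
    using forest rtrancl_mono[OF subset_insertI] unfolding rooted_forest_def by blast
  have "(\<rho> a, u) \<in> ?E\<^sup>*" if "\<rho> u = b" for u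
    using reach[of a] reach[of u] that by (metis insertI1 rtrancl.rtrancl_into_rtrancl rtrancl_trans)
  with forest b_root \<rho>b \<open>\<rho> a \<noteq> b\<close> reach show ?thesis
    unfolding rooted_forest_def by auto
qed

lemma rooted_forest_root_mem:
  assumes "rooted_forest E \<rho>" and "E \<subseteq> V \<times> V" and "v \<in> V"
  shows "\<rho> v \<in> V"
proof -
  have "(\<rho> v, v) \<in> E\<^sup>*"
    using assms(1) by (simp add: rooted_forest_def)
  then show ?thesis
    by (cases rule: converse_rtranclE) (use assms in auto)
qed

lemma rooted_forest_is_tree:
  assumes forest: "rooted_forest E \<rho>" and "E \<subseteq> V \<times> V" and "r \<in> V" and "\<rho> r = r"
  defines "C \<equiv> {u \<in> V. \<rho> u = r}"
  shows "is_tree C (E \<inter> C \<times> C)"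
  unfolding is_tree_def
proof (intro conjI bexI[of _ r] ballI impI)
  show "r \<in> C"
    using assms by (simp add: C_def)
  fix v assume "v \<in> C" and "v \<noteq> r"
  then have "(r, v) \<in> E\<^sup>*"
    using forest by (auto simp: C_def rooted_forest_def)
  then obtain xs where xs: "is_dpath E xs" "hd xs = r" "last xs = v"
    and reach: "\<forall>x \<in> set xs. (r, x) \<in> E\<^sup>*"
    using rtrancl_imp_dpath by blast
  have "set xs \<subseteq> C"
  proof
    fix x assume "x \<in> set xs"
    with reach have "(r, x) \<in> E\<^sup>*" by blast
    then have "\<rho> x = r"
      using rooted_forest_rtrancl[OF forest] \<open>\<rho> r = r\<close> by metis
    moreover have "x \<in> V"
      using \<open>(r, x) \<in> E\<^sup>*\<close> by (cases rule: rtranclE) (use assms(2,3) in auto)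
    ultimately show "x \<in> C"
      by (simp add: C_def)
  qed
  then have "is_dpath (E \<inter> C \<times> C) xs"
    using xs(1) by (rule is_dpath_restrict[rotated])
  moreover have "ys = xs" if "is_dpath (E \<inter> C \<times> C) ys" "hd ys = r" "last ys = v" for ys
  proof (rule is_dpath_unique)
    show "is_dpath E ys"
      using that(1) by (rule is_dpath_mono[rotated]) blast
    show "(x, hd ys) \<notin> E" for x
      using forest that(2) \<open>\<rho> r = r\<close> unfolding rooted_forest_def by metis
  qed (use forest xs that in \<open>auto simp: rooted_forest_def\<close>)
  ultimately show "\<exists>!xs. is_dpath (E \<inter> C \<times> C) xs \<and> hd xs = r \<and> last xs = v"
    using xs by blast
qed blast

lemma rooted_forest_is_forest:
  assumes forest: "rooted_forest E \<rho>" and E: "E \<subseteq> V \<times> V"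
  shows "is_forest V E"
  unfolding is_forest_def
proof (intro exI conjI)
  let ?C = "\<lambda>r. {u \<in> V. \<rho> u = r}"
  show "partition_on V (?C ` \<rho> ` V)"
    by (auto simp: partition_on_def disjoint_def)
  show "\<forall>(x, y) \<in> E. \<exists>C \<in> ?C ` \<rho> ` V. x \<in> C \<and> y \<in> C"
    using forest E by (fastforce simp: rooted_forest_def)
  show "\<forall>C \<in> ?C ` \<rho> ` V. is_tree C (E \<inter> C \<times> C)"
    using rooted_forest_is_tree[OF forest E] rooted_forest_root_mem[OF forest E]
      rooted_forest_root_idem[OF forest] by blast
qed

lemma rooted_forest_is_root_fixed:
  assumes forest: "rooted_forest (fst S) \<rho>" and "is_root S r"
  shows "\<rho> r = r"
proof (rule ccontr)
  assume "\<rho> r \<noteq> r"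
  have "(\<rho> r, r) \<in> (fst S)\<^sup>*"
    using forest by (simp add: rooted_forest_def)
  then have "\<rho> r \<in> CT S r"
    unfolding CT_def by (metis mem_Collect_eq rtrancl_converseI rtrancl_mono sup_ge2 subsetD)
  then obtain xs where "is_dpath (fst S) xs" "hd xs = r" "last xs = \<rho> r"
    using \<open>is_root S r\<close> \<open>\<rho> r \<noteq> r\<close> unfolding is_root_def by metis
  then obtain ys where "(last ys, \<rho> r) \<in> fst S"
    using \<open>\<rho> r \<noteq> r\<close> by (metis is_dpath_last_edge)
  with forest show False
    by (simp add: rooted_forest_def)
qed

lemma child_rooted_forest:
  assumes "child n S S'" and "rooted_forest (fst S) \<rho>"
  shows "\<exists>\<rho>'. rooted_forest (fst S') \<rho>'"
  using assms
proof (induction rule: child.induct)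
  case (step6 S w \<phi> v)
  have isolated: "(x, v) \<notin> fst S" "(v, x) \<notin> fst S" for x
    using \<open>v \<notin> labels S\<close> unfolding labels_def by force+
  have "w \<noteq> v"
    using step6.hyps(6,8) unfolding labels_def by force
  have "(\<rho> w, w) \<in> (fst S)\<^sup>*"
    using step6.prems by (simp add: rooted_forest_def)
  then have "\<rho> w \<noteq> v"
    using \<open>w \<noteq> v\<close> isolated(2) by (cases rule: converse_rtranclE) auto
  then show ?case
    using rooted_forest_insert[OF step6.prems isolated(1)] by auto
next
  case (step8 S r k j)
  have "r k \<noteq> r j"
    using step8.hyps(10,12,13) unfolding inj_on_def by fastforce
  moreover have "\<rho> (r k) = r k" "\<rho> (r j) = r j"
    using rooted_forest_is_root_fixed[OF step8.prems] step8.hyps(11-13) by auto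
  moreover have "(x, \<rho> (r j)) \<notin> fst S" for x
    using step8.prems by (simp add: rooted_forest_def)
  ultimately show ?case
    using rooted_forest_insert[OF step8.prems, of "r j" "r k"] by auto
qed auto

lemma generated_rooted_forest:
  assumes "generated n S0 S" and "rooted_forest (fst S0) \<rho>"
  shows "\<exists>\<rho>'. rooted_forest (fst S) \<rho>'"
  using assms by induction (auto intro: child_rooted_forest)

theorem lemma4:
  fixes n :: nat and \<phi> :: fml and w :: nat and S :: seq
  assumes "generated n ({}, {(w, \<phi>)}) S"
  shows "forestlike S"
proof -
  obtain \<rho> where "rooted_forest (fst S) \<rho>"
    using generated_rooted_forest[OF assms] rooted_forest_empty by auto
  moreover have "fst S \<subseteq> labels S \<times> labels S"
    by (force simp: labels_def)
  ultimately show ?thesis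
    unfolding forestlike_def by (rule rooted_forest_is_forest)
qed

end
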